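(* Let $M\in\mathrm{SL}(2,\mathbb Z)$ be a hyperbolic matrix, $N\in\mathbb N$, and $\{\phi_j\}_{j=1}^N$ an eigenbasis of $\hat M$ in $\mathcal H_N$ (setting in the context). Let $1\le p<\infty$, $L>0$, and let $D=D(r)$ satisfy $1/D=o(r)$ as $r\to0$; let $b^\pm_{q,r}$ be the majorant/minorant trigonometric polynomials of the arcs $B_1(q,r)\subset\mathbb T^1$ described in the context. Define $$\mathcal S^\pm(N,L):=\Big\{1\le j\le N:\ \sup_{q\in\mathbb T^1}\Big|\frac{\langle\mathrm{Op}_N(b^\pm_{q,r})\phi_j,\phi_j\rangle}{\mu(b^\pm_{q,r})}-1\Big|\ge L\Big\}.$$ Then $$\frac{\#\mathcal S^\pm(N,L)}{N}\le\frac{c\,D^{p-1}}{L^p}\sum_{m\in\mathbb Z,\,1\le|m|\le D}V_p\big(N,\hat T_N(m,0)\big),$$ where $c$ depends on $p$.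
   Context: $M=\exp\begin{pmatrix}\gamma&\beta\\-\alpha&-\gamma\end{pmatrix}\in\mathrm{SL}(2,\mathbb Z)$, $\gamma^2>\alpha\beta$. With $h=1/N$: $\hat q\psi=q\psi$, $\hat p\psi=\frac{h}{2\pi i}\psi'$, $\hat T_v=\exp(-\frac{2\pi i}{h}(v_1\hat p-v_2\hat q))$, $\hat H=\frac12\alpha\hat q^2+\frac12\beta\hat p^2+\frac\gamma2(\hat q\hat p+\hat p\hat q)$, $\hat M=e^{-2\pi i\hat H/h}$ acting on the $N$-dimensional Hilbert space $\mathcal H_N$ of distributions $\psi(q)=\sum_{k\in\mathbb Z}\Psi(k)\delta(q-(k+\kappa_1)/N)$, $\Psi(k+N)=e^{-2\pi i\kappa_2}\Psi(k)$ (fixed $\kappa\in\mathbb T^2$ chosen so that $\hat M$ preserves $\mathcal H_N$), inner product $\frac1N\sum_{k=1}^N\Psi(k)\overline{\Phi(k)}$; an eigenbasis is an orthonormal basis of eigenvectors of $\hat M$. $\hat T_N(n):=\hat T_{n/N}$ for $n\in\mathbb Z^2$. A function $a(q)=\sum_{m\in\mathbb Z}\tilde a(m)e^{2\pi imq}$ on $\mathbb T^1$ is quantized as $\mathrm{Op}_N(a)=\sum_m\tilde a(m)\hat T_N(m,0)$, and $\mu(a)=\int_{\mathbb T^1}a=\tilde a(0)$. For $m\ne0$, $V_p(N,\hat T_N(m,0)):=\frac1N\sum_{j=1}^N|\langle\hat T_N(m,0)\phi_j,\phi_j\rangle|^p$. Majorants/minorants: with $rD\ge1$, $a_r^\pm$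 are trigonometric polynomials on $\mathbb T^1$ with $a_r^-\le\chi_{B_1(0,r)}\le a_r^+$, $\widetilde{a_r^\pm}(m)=0$ for $|m|\ge D$, $\widetilde{a_r^\pm}(0)=\mathrm{Vol}(B_1(0,r))+O(1/D)$, $|\widetilde{a_r^\pm}(m)|\le c_0r$ for all $m$ with an absolute constant $c_0$; $b^\pm_{q,r}(y):=a_r^\pm(y-q)$. *)

theory Defs
  imports "HOL-Analysis.Analysis" "HOL-Library.Landau_Symbols"
begin

definition e2pi :: "real \<Rightarrow> complex" where
  "e2pi x = cis (2 * pi * x)"

text \<open>The Hilbert space H_N: coefficient sequences Psi(k) of the Dirac comb
  psi(q) = sum_k Psi(k) delta(q - (k + kappa_1)/N), with Psi(k+N) = e(-kappa_2) Psi(k).\<close>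
definition HN :: "nat \<Rightarrow> real \<times> real \<Rightarrow> (int \<Rightarrow> complex) set" where
  "HN N \<kappa> = {\<Psi>. \<forall>k. \<Psi> (k + int N) = e2pi (- snd \<kappa>) * \<Psi> k}"

definition ipN :: "nat \<Rightarrow> (int \<Rightarrow> complex) \<Rightarrow> (int \<Rightarrow> complex) \<Rightarrow> complex" where
  "ipN N \<Psi> \<Phi> = (1 / of_nat N) * (\<Sum>k\<in>{1..int N}. \<Psi> k * cnj (\<Phi> k))"

text \<open>T_N(n) = T_{n/N} = exp(-(2 pi i/h)((n1/N) p - (n2/N) q)), h = 1/N, acting on the
  coefficients: (T_N(n) Psi)(k) = e(n2 (k+kappa_1)/N) e(-n1 n2/(2N)) Psi(k - n1).\<close>
definition TN :: "nat \<Rightarrow> real \<times> real \<Rightarrow> int \<times> int \<Rightarrow> (int \<Rightarrow> complex) \<Rightarrow> (int \<Rightarrow> complex)" where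
  "TN N \<kappa> n \<Psi> = (\<lambda>k. e2pi (real_of_int (snd n) * (real_of_int k + fst \<kappa>) / real N)
                      * e2pi (- real_of_int (fst n * snd n) / (2 * real N)) * \<Psi> (k - fst n))"

definition fcoef :: "(real \<Rightarrow> real) \<Rightarrow> int \<Rightarrow> complex" where
  "fcoef f m = integral {0..1} (\<lambda>y. complex_of_real (f y) * e2pi (- (real_of_int m * y)))"

definition mu :: "(real \<Rightarrow> real) \<Rightarrow> real" where
  "mu f = integral {0..1} f"

definition OpN :: "nat \<Rightarrow> real \<times> real \<Rightarrow> (real \<Rightarrow> real) \<Rightarrow> (int \<Rightarrow> complex) \<Rightarrow> (int \<Rightarrow> complex)" where
  "OpN N \<kappa> f \<Psi> = (\<lambda>k. infsum (\<lambda>m::int. fcoef f m * TN N \<kappa> (m, 0) \<Psi> k) UNIV)"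

definition trig_poly :: "(real \<Rightarrow> real) \<Rightarrow> bool" where
  "trig_poly f \<longleftrightarrow> (\<exists>K::int. \<exists>c::int \<Rightarrow> complex.
      \<forall>y. complex_of_real (f y) = (\<Sum>m\<in>{-K..K}. c m * e2pi (real_of_int m * y)))"

definition tdist :: "real \<Rightarrow> real \<Rightarrow> real" where
  "tdist x y = \<bar>x - y - real_of_int (round (x - y))\<bar>"

definition arc_ind :: "real \<Rightarrow> real \<Rightarrow> real \<Rightarrow> real" where
  "arc_ind q r y = (if tdist y q < r then 1 else 0)"

definition arc_vol :: "real \<Rightarrow> real" where
  "arc_vol r = min (2 * r) 1"

definition Vp :: "nat \<Rightarrow> real \<times> real \<Rightarrow> (nat \<Rightarrow> int \<Rightarrow> complex) \<Rightarrow> real \<Rightarrow> int \<Rightarrow> real" where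
  "Vp N \<kappa> \<phi> p m = (1 / real N) *
     (\<Sum>j\<in>{1..N}. cmod (ipN N (TN N \<kappa> (m, 0) (\<phi> j)) (\<phi> j)) powr p)"

definition mat_app :: "int^2^2 \<Rightarrow> int \<times> int \<Rightarrow> int \<times> int" where
  "mat_app M n = (M$1$1 * fst n + M$1$2 * snd n, M$2$1 * fst n + M$2$2 * snd n)"

text \<open>M in SL(2,Z) of the form exp of a traceless real matrix with gamma^2 > alpha beta,
  i.e. det M = 1 and tr M > 2 (hyperbolic).\<close>
definition hyperbolic_SL2Z :: "int^2^2 \<Rightarrow> bool" where
  "hyperbolic_SL2Z M \<longleftrightarrow> det M = 1 \<and> M$1$1 + M$2$2 > 2"

text \<open>U is (up to a phase) the quantization M^ of M on H_N: a unitary operator on H_N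
  satisfying the exact Egorov property U T_N(n) = T_N(M n) U.\<close>
definition quantizes :: "nat \<Rightarrow> real \<times> real \<Rightarrow> int^2^2 \<Rightarrow> ((int \<Rightarrow> complex) \<Rightarrow> (int \<Rightarrow> complex)) \<Rightarrow> bool" where
  "quantizes N \<kappa> M U \<longleftrightarrow>
     U ` HN N \<kappa> \<subseteq> HN N \<kappa> \<and>
     (\<forall>\<Psi>\<in>HN N \<kappa>. \<forall>\<Phi>\<in>HN N \<kappa>. \<forall>c. U (\<lambda>k. c * \<Psi> k + \<Phi> k) = (\<lambda>k. c * U \<Psi> k + U \<Phi> k)) \<and>
     (\<forall>\<Psi>\<in>HN N \<kappa>. \<forall>\<Phi>\<in>HN N \<kappa>. ipN N (U \<Psi>) (U \<Phi>) = ipN N \<Psi> \<Phi>) \<and>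
     (\<forall>n. \<forall>\<Psi>\<in>HN N \<kappa>. U (TN N \<kappa> n \<Psi>) = TN N \<kappa> (mat_app M n) (U \<Psi>))"

definition eigenbasis :: "nat \<Rightarrow> real \<times> real \<Rightarrow> int^2^2 \<Rightarrow> (nat \<Rightarrow> int \<Rightarrow> complex) \<Rightarrow> bool" where
  "eigenbasis N \<kappa> M \<phi> \<longleftrightarrow>
     (\<forall>j\<in>{1..N}. \<phi> j \<in> HN N \<kappa>) \<and>
     (\<forall>i\<in>{1..N}. \<forall>j\<in>{1..N}. ipN N (\<phi> i) (\<phi> j) = (if i = j then 1 else 0)) \<and>
     (\<exists>U. quantizes N \<kappa> M U \<and> (\<forall>j\<in>{1..N}. \<exists>ev::complex. U (\<phi> j) = (\<lambda>k. ev * \<phi> j k)))"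

text \<open>The exceptional set S^{+-}(N,L) for the family b_{q,r}(y) = a_r(y - q).\<close>
definition exc_set :: "nat \<Rightarrow> real \<times> real \<Rightarrow> (nat \<Rightarrow> int \<Rightarrow> complex) \<Rightarrow> (real \<Rightarrow> real) \<Rightarrow> real \<Rightarrow> nat set" where
  "exc_set N \<kappa> \<phi> ar L = {j\<in>{1..N}.
     (SUP q\<in>{0..<1}. cmod (ipN N (OpN N \<kappa> (\<lambda>y. ar (y - q)) (\<phi> j)) (\<phi> j)
                          / complex_of_real (mu (\<lambda>y. ar (y - q))) - 1)) \<ge> L}"

end

(*
  Expanding b(y) = a(y - q) in Fourier modes, for a normalized eigenvector phi_j
  <Op_N(b) phi_j, phi_j> = mu(a) + sum_{1 <= |m| <= D} e(-mq) a~(m) <T_N(m,0) phi_j, phi_j>.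
  Since |a~(m)| <= c0 r and mu(a) >= r once 1/D = o(r), the relative deviation is at most
  max(c0,1) sum_m |<T_N(m,0) phi_j, phi_j>|, uniformly in q. Jensen's inequality for t^p over
  the at most 2D frequencies and Chebyshev's inequality for the counting measure on {1..N}
  give the bound with c = max(c0,1)^p 2^(p-1).
*)

theory Submission
  imports Defs
begin

lemma e2pi_add: "e2pi x * e2pi y = e2pi (x + y)"
  by (simp add: e2pi_def cis_mult algebra_simps)

lemma e2pi_of_int: "e2pi (real_of_int k) = 1"
  unfolding e2pi_def by (metis cis_multiple_2pi Ints_of_int)

lemma e2pi_zero [simp]: "e2pi 0 = 1"
  by (simp add: e2pi_def)

lemma norm_e2pi [simp]: "norm (e2pi x) = 1"
  by (simp add: e2pi_def)

lemma has_integral_e2pi_int: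
  "((\<lambda>y. e2pi (real_of_int k * y)) has_integral (if k = 0 then 1 else 0)) {0..1}"
proof (cases "k = 0")
  case True
  then show ?thesis
    using has_integral_const_real[of "1::complex" 0 1] by (simp add: e2pi_def)
next
  case False
  define F where "F y = e2pi (real_of_int k * y) / (\<i> * (2 * pi * real_of_int k))" for y
  have "(F has_vector_derivative e2pi (real_of_int k * y)) (at y within {0..1})" for y
    unfolding F_def e2pi_def has_vector_derivative_def using False
    by (auto intro!: derivative_eq_intros simp: field_simps scaleR_conv_of_real)
  then have "((\<lambda>y. e2pi (real_of_int k * y)) has_integral F 1 - F 0) {0..1}"
    by (intro fundamental_theorem_of_calculus) auto
  moreover have "F 1 - F 0 = 0"
    unfolding F_def using e2pi_of_int[of k] by (simp add: e2pi_def)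
  ultimately show ?thesis
    using False by simp
qed

lemma has_integral_fcoef_of_expansion:
  assumes f: "\<And>y. complex_of_real (f y) = (\<Sum>n\<in>{-K..K}. c n * e2pi (real_of_int n * y))"
  shows "((\<lambda>y. complex_of_real (f y) * e2pi (- (real_of_int m * y))) has_integral
           (if m \<in> {-K..K} then c m else 0)) {0..1}"
proof -
  have "complex_of_real (f y) * e2pi (- (real_of_int m * y)) =
      (\<Sum>n\<in>{-K..K}. c n * e2pi (real_of_int (n - m) * y))" for y
    unfolding f sum_distrib_right
    by (intro sum.cong refl) (simp add: mult.assoc e2pi_add algebra_simps)
  moreover have "((\<lambda>y. \<Sum>n\<in>{-K..K}. c n * e2pi (real_of_int (n - m) * y)) has_integral
          (\<Sum>n\<in>{-K..K}. c n * (if n - m = 0 then 1 else 0))) {0..1}"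
    by (intro has_integral_sum has_integral_mult_right has_integral_e2pi_int) auto
  moreover have "(\<Sum>n\<in>{-K..K}. c n * (if n - m = 0 then 1 else 0)) =
      (if m \<in> {-K..K} then c m else 0)"
    by (simp add: if_distrib cong: if_cong)
  ultimately show ?thesis
    by simp
qed

lemma fcoef_of_expansion:
  assumes "\<And>y. complex_of_real (f y) = (\<Sum>n\<in>{-K..K}. c n * e2pi (real_of_int n * y))"
  shows "fcoef f m = (if m \<in> {-K..K} then c m else 0)"
  unfolding fcoef_def using has_integral_fcoef_of_expansion[OF assms] by blast

lemma fcoef_zero_of_expansion:
  assumes f: "\<And>y. complex_of_real (f y) = (\<Sum>n\<in>{-K..K}. c n * e2pi (real_of_int n * y))"
  shows "fcoef f 0 = complex_of_real (mu f)"
proof -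
  have h: "((\<lambda>y. complex_of_real (f y)) has_integral fcoef f 0) {0..1}"
    using has_integral_fcoef_of_expansion[OF f, of 0] fcoef_of_expansion[OF f, of 0] by simp
  have "(f has_integral Re (fcoef f 0)) {0..1}"
    using has_integral_linear[OF h bounded_linear_Re] by (simp add: o_def)
  then have "mu f = Re (fcoef f 0)"
    unfolding mu_def by blast
  moreover have "((\<lambda>y. 0) has_integral Im (fcoef f 0)) {0..1}"
    using has_integral_linear[OF h bounded_linear_Im] by (simp add: o_def)
  then have "Im (fcoef f 0) = 0"
    using has_integral_0_eq by fastforce
  ultimately show ?thesis
    by (simp add: complex_eq_iff)
qed

lemma expansion_shift:
  assumes "\<And>y. complex_of_real (a y) = (\<Sum>n\<in>{-K..K}. c n * e2pi (real_of_int n * y))"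
  shows "complex_of_real (a (y - q)) =
    (\<Sum>n\<in>{-K..K}. (c n * e2pi (- (real_of_int n * q))) * e2pi (real_of_int n * y))"
  using assms by (auto intro!: sum.cong simp: mult.assoc e2pi_add algebra_simps)

lemma trig_poly_shift:
  assumes "trig_poly a"
  shows "trig_poly (\<lambda>y. a (y - q))"
proof -
  obtain K c where a: "\<And>y. complex_of_real (a y) = (\<Sum>n\<in>{-K..K}. c n * e2pi (real_of_int n * y))"
    using assms unfolding trig_poly_def by blast
  show ?thesis
    unfolding trig_poly_def using expansion_shift[OF a, of _ q]
    by (intro exI[of _ K] exI[of _ "\<lambda>n. c n * e2pi (- (real_of_int n * q))"]) blast
qed

lemma trig_poly_fcoef_shift:
  assumes "trig_poly a"
  shows "fcoef (\<lambda>y. a (y - q)) m = e2pi (- (real_of_int m * q)) * fcoef a m"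
proof -
  obtain K c where a: "\<And>y. complex_of_real (a y) = (\<Sum>n\<in>{-K..K}. c n * e2pi (real_of_int n * y))"
    using assms unfolding trig_poly_def by blast
  show ?thesis
    unfolding fcoef_of_expansion[OF a] fcoef_of_expansion[OF expansion_shift[OF a]] by simp
qed

lemma trig_poly_fcoef_zero: "trig_poly a \<Longrightarrow> fcoef a 0 = complex_of_real (mu a)"
  unfolding trig_poly_def using fcoef_zero_of_expansion by blast

lemma trig_poly_mu_shift:
  assumes "trig_poly a"
  shows "mu (\<lambda>y. a (y - q)) = mu a"
  using trig_poly_fcoef_shift[OF assms, of q 0] trig_poly_fcoef_zero[OF assms]
    trig_poly_fcoef_zero[OF trig_poly_shift[OF assms]] by simp

lemma ipN_sum_left:
  assumes "finite W"
  shows "ipN N (\<lambda>k. \<Sum>m\<in>W. g m * T m k) \<psi> = (\<Sum>m\<in>W. g m * ipN N (T m) \<psi>)"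
  unfolding ipN_def sum_distrib_right sum_distrib_left
  by (subst sum.swap) (simp add: algebra_simps)

lemma TN_zero [simp]: "TN N \<kappa> (0, 0) \<psi> = \<psi>"
  unfolding TN_def by simp

lemma ipN_OpN_eq_sum:
  assumes "finite W" and "\<And>m. m \<notin> W \<Longrightarrow> fcoef f m = 0"
  shows "ipN N (OpN N \<kappa> f \<psi>) \<psi> = (\<Sum>m\<in>W. fcoef f m * ipN N (TN N \<kappa> (m, 0) \<psi>) \<psi>)"
proof -
  have "OpN N \<kappa> f \<psi> = (\<lambda>k. \<Sum>m\<in>W. fcoef f m * TN N \<kappa> (m, 0) \<psi> k)"
  proof
    fix k
    have "infsum (\<lambda>m. fcoef f m * TN N \<kappa> (m, 0) \<psi> k) UNIV =
        infsum (\<lambda>m. fcoef f m * TN N \<kappa> (m, 0) \<psi> k) W"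
      by (rule infsum_cong_neutral) (use assms(2) in auto)
    then show "OpN N \<kappa> f \<psi> k = (\<Sum>m\<in>W. fcoef f m * TN N \<kappa> (m, 0) \<psi> k)"
      unfolding OpN_def using assms(1) by simp
  qed
  then show ?thesis
    using ipN_sum_left[OF assms(1)] by simp
qed

definition nonzero_freqs :: "real \<Rightarrow> int set" where
  "nonzero_freqs d = {m. 1 \<le> \<bar>m\<bar> \<and> real_of_int \<bar>m\<bar> \<le> d}"

lemma nonzero_freqs_eq: "nonzero_freqs d = {-\<lfloor>d\<rfloor>..-1} \<union> {1..\<lfloor>d\<rfloor>}"
  unfolding nonzero_freqs_def le_floor_iff[symmetric] by auto

lemma finite_nonzero_freqs [simp]: "finite (nonzero_freqs d)"
  unfolding nonzero_freqs_eq by simp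

lemma card_nonzero_freqs_le:
  assumes "d \<ge> 0"
  shows "real (card (nonzero_freqs d)) \<le> 2 * d"
proof -
  have "card (nonzero_freqs d) \<le> card {-\<lfloor>d\<rfloor>..-1} + card {1..\<lfloor>d\<rfloor>}"
    unfolding nonzero_freqs_eq by (rule card_Un_le)
  also have "\<dots> = 2 * nat \<lfloor>d\<rfloor>"
    by simp
  finally show ?thesis
    using assms by linarith
qed

lemma ipN_OpN_shift_eq:
  assumes a: "trig_poly a" and nrm: "ipN N \<psi> \<psi> = 1"
    and vanish: "\<And>m. real_of_int \<bar>m\<bar> \<ge> d \<Longrightarrow> fcoef a m = 0"
  shows "ipN N (OpN N \<kappa> (\<lambda>y. a (y - q)) \<psi>) \<psi> = complex_of_real (mu a) +
    (\<Sum>m\<in>nonzero_freqs d. e2pi (- (real_of_int m * q)) * fcoef a m * ipN N (TN N \<kappa> (m, 0) \<psi>) \<psi>)"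
proof -
  have zero_notin: "0 \<notin> nonzero_freqs d"
    by (simp add: nonzero_freqs_def)
  have "fcoef (\<lambda>y. a (y - q)) m = 0" if "m \<notin> insert 0 (nonzero_freqs d)" for m
    using that vanish[of m] unfolding trig_poly_fcoef_shift[OF a] nonzero_freqs_def by auto
  then have "ipN N (OpN N \<kappa> (\<lambda>y. a (y - q)) \<psi>) \<psi> =
      (\<Sum>m\<in>insert 0 (nonzero_freqs d). fcoef (\<lambda>y. a (y - q)) m * ipN N (TN N \<kappa> (m, 0) \<psi>) \<psi>)"
    by (intro ipN_OpN_eq_sum) auto
  also have "\<dots> = complex_of_real (mu a) +
      (\<Sum>m\<in>nonzero_freqs d. e2pi (- (real_of_int m * q)) * fcoef a m * ipN N (TN N \<kappa> (m, 0) \<psi>) \<psi>)"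
    using zero_notin by (simp add: trig_poly_fcoef_shift[OF a] trig_poly_fcoef_zero[OF a] nrm)
  finally show ?thesis .
qed

lemma normalized_deviation_le:
  assumes a: "trig_poly a" and nrm: "ipN N \<psi> \<psi> = 1"
    and vanish: "\<And>m. real_of_int \<bar>m\<bar> \<ge> d \<Longrightarrow> fcoef a m = 0"
    and coef: "\<And>m. cmod (fcoef a m) \<le> B * r" and "0 \<le> B" and "0 < r" and "r \<le> mu a"
  shows "cmod (ipN N (OpN N \<kappa> (\<lambda>y. a (y - q)) \<psi>) \<psi> / complex_of_real (mu (\<lambda>y. a (y - q))) - 1)
    \<le> B * (\<Sum>m\<in>nonzero_freqs d. cmod (ipN N (TN N \<kappa> (m, 0) \<psi>) \<psi>))"
proof -
  define S where "S = (\<Sum>m\<in>nonzero_freqs d. e2pi (- (real_of_int m * q)) * fcoef a m * ipN N (TN N \<kappa> (m, 0) \<psi>) \<psi>)"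
  define \<Sigma> where "\<Sigma> = (\<Sum>m\<in>nonzero_freqs d. cmod (ipN N (TN N \<kappa> (m, 0) \<psi>) \<psi>))"
  have mu_pos: "mu a > 0"
    using assms by linarith
  have "cmod S \<le> (\<Sum>m\<in>nonzero_freqs d. B * r * cmod (ipN N (TN N \<kappa> (m, 0) \<psi>) \<psi>))"
    unfolding S_def
    by (rule order.trans[OF norm_sum sum_mono]) (simp add: norm_mult coef mult_right_mono)
  also have "\<dots> = r * (B * \<Sigma>)"
    by (simp add: \<Sigma>_def sum_distrib_left ac_simps)
  also have "\<dots> \<le> mu a * (B * \<Sigma>)"
    using assms by (intro mult_right_mono) (auto simp: \<Sigma>_def sum_nonneg)
  finally have "cmod S / mu a \<le> B * \<Sigma>"
    using mu_pos by (simp add: divide_le_eq mult.commute)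
  moreover have "ipN N (OpN N \<kappa> (\<lambda>y. a (y - q)) \<psi>) \<psi> / complex_of_real (mu (\<lambda>y. a (y - q))) - 1
      = S / complex_of_real (mu a)"
    using ipN_OpN_shift_eq[OF a nrm vanish, where \<kappa>=\<kappa> and q=q] trig_poly_mu_shift[OF a, of q] mu_pos
    unfolding S_def by (simp add: field_simps)
  ultimately show ?thesis
    using mu_pos by (simp add: norm_divide \<Sigma>_def)
qed

lemma powr_sum_le_card_powr_sum_pos:
  fixes y :: "'a \<Rightarrow> real"
  assumes "finite T" and "T \<noteq> {}" and pos: "\<And>m. m \<in> T \<Longrightarrow> y m > 0" and "p \<ge> 1"
  shows "(\<Sum>m\<in>T. y m) powr p \<le> real (card T) powr (p - 1) * (\<Sum>m\<in>T. y m powr p)"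
proof -
  define t where "t = real (card T)"
  have t: "t > 0"
    unfolding t_def using assms by (simp add: card_gt_0_iff)
  have "(\<Sum>m\<in>T. (1 / t) *\<^sub>R y m) powr p \<le> (\<Sum>m\<in>T. (1 / t) * y m powr p)"
    by (rule convex_on_sum[OF assms(1,2) powr_convex[OF assms(4)]]) (use t pos in \<open>auto simp: t_def\<close>)
  then have "(\<Sum>m\<in>T. y m) powr p / t powr p \<le> (\<Sum>m\<in>T. y m powr p) / t"
    using t pos
    by (simp add: sum_divide_distrib[symmetric] sum_distrib_left[symmetric] powr_divide sum_nonneg less_imp_le)
  then have "(\<Sum>m\<in>T. y m) powr p \<le> (\<Sum>m\<in>T. y m powr p) / t * t powr p"
    using t by (simp add: divide_le_eq)
  also have "\<dots> = t powr (p - 1) * (\<Sum>m\<in>T. y m powr p)"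
    using t by (simp add: powr_diff field_simps)
  finally show ?thesis
    unfolding t_def .
qed

lemma powr_sum_le:
  fixes y :: "'a \<Rightarrow> real"
  assumes "finite T" and nonneg: "\<And>m. m \<in> T \<Longrightarrow> y m \<ge> 0" and "p \<ge> 1"
    and card: "real (card T) \<le> n"
  shows "(\<Sum>m\<in>T. y m) powr p \<le> n powr (p - 1) * (\<Sum>m\<in>T. y m powr p)"
proof -
  define T' where "T' = {m\<in>T. y m > 0}"
  have "finite T'" and "T' \<subseteq> T"
    using assms(1) unfolding T'_def by auto
  have drop_zeros: "(\<Sum>m\<in>T. g m) = (\<Sum>m\<in>T'. g m)" if "\<And>m. m \<in> T \<Longrightarrow> y m = 0 \<Longrightarrow> g m = 0" for g
    unfolding T'_def using assms(1) nonneg that by (intro sum.mono_neutral_right) (auto simp: less_le)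
  show ?thesis
  proof (cases "T' = {}")
    case True
    then show ?thesis
      using drop_zeros[of y] drop_zeros[of "\<lambda>m. y m powr p"] by simp
  next
    case False
    have "(\<Sum>m\<in>T'. y m) powr p \<le> real (card T') powr (p - 1) * (\<Sum>m\<in>T'. y m powr p)"
      by (rule powr_sum_le_card_powr_sum_pos[OF \<open>finite T'\<close> False _ assms(3)]) (simp add: T'_def)
    also have "\<dots> \<le> n powr (p - 1) * (\<Sum>m\<in>T'. y m powr p)"
      using card card_mono[OF assms(1) \<open>T' \<subseteq> T\<close>] assms(3)
      by (intro mult_right_mono powr_mono2) (auto simp: sum_nonneg)
    finally show ?thesis
      using drop_zeros[of y] drop_zeros[of "\<lambda>m. y m powr p"] by simp
  qed
qed

lemma card_mult_powr_le_sum_powr: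
  fixes f :: "'a \<Rightarrow> real"
  assumes "finite A" and "S \<subseteq> A" and above: "\<And>j. j \<in> S \<Longrightarrow> L \<le> f j"
    and "0 \<le> L" and "0 \<le> p"
  shows "real (card S) * L powr p \<le> (\<Sum>j\<in>A. f j powr p)"
proof -
  have "real (card S) * L powr p = (\<Sum>j\<in>S. L powr p)"
    by simp
  also have "\<dots> \<le> (\<Sum>j\<in>S. f j powr p)"
    using assms by (intro sum_mono powr_mono2) auto
  also have "\<dots> \<le> (\<Sum>j\<in>A. f j powr p)"
    using assms by (intro sum_mono2) auto
  finally show ?thesis .
qed

lemma exc_set_card_bound:
  assumes nrm: "\<And>j. j \<in> {1..N} \<Longrightarrow> ipN N (\<phi> j) (\<phi> j) = 1"
    and a: "trig_poly a" and vanish: "\<And>m. real_of_int \<bar>m\<bar> \<ge> d \<Longrightarrow> fcoef a m = 0"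
    and coef: "\<And>m. cmod (fcoef a m) \<le> B * r" and "0 \<le> B" and "0 < r" and "r \<le> mu a"
    and "0 \<le> d" and "0 < L" and "1 \<le> p"
  shows "real (card (exc_set N \<kappa> \<phi> a L)) * L powr p
    \<le> B powr p * (2 * d) powr (p - 1) * real N * (\<Sum>m\<in>nonzero_freqs d. Vp N \<kappa> \<phi> p m)"
proof -
  define x where "x j m = cmod (ipN N (TN N \<kappa> (m, 0) (\<phi> j)) (\<phi> j))" for j m
  have above: "L \<le> B * (\<Sum>m\<in>nonzero_freqs d. x j m)" if "j \<in> exc_set N \<kappa> \<phi> a L" for j
  proof -
    have "j \<in> {1..N}"
      using that unfolding exc_set_def by blast
    have "(SUP q\<in>{0..<1}. cmod (ipN N (OpN N \<kappa> (\<lambda>y. a (y - q)) (\<phi> j)) (\<phi> j)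
        / complex_of_real (mu (\<lambda>y. a (y - q))) - 1)) \<le> B * (\<Sum>m\<in>nonzero_freqs d. x j m)"
      unfolding x_def
      by (intro cSUP_least normalized_deviation_le[OF a nrm vanish coef]) (use assms \<open>j \<in> {1..N}\<close> in auto)
    then show ?thesis
      using that unfolding exc_set_def by auto
  qed
  have "real (card (exc_set N \<kappa> \<phi> a L)) * L powr p
      \<le> (\<Sum>j\<in>{1..N}. (B * (\<Sum>m\<in>nonzero_freqs d. x j m)) powr p)"
    using assms by (intro card_mult_powr_le_sum_powr above) (auto simp: exc_set_def)
  also have "\<dots> \<le> (\<Sum>j\<in>{1..N}. B powr p * ((2 * d) powr (p - 1) * (\<Sum>m\<in>nonzero_freqs d. x j m powr p)))"
  proof (intro sum_mono)
    fix j
    have "(\<Sum>m\<in>nonzero_freqs d. x j m) powr p \<le> (2 * d) powr (p - 1) * (\<Sum>m\<in>nonzero_freqs d. x j m powr p)"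
      using assms card_nonzero_freqs_le[of d] by (intro powr_sum_le) (auto simp: x_def)
    then show "(B * (\<Sum>m\<in>nonzero_freqs d. x j m)) powr p
        \<le> B powr p * ((2 * d) powr (p - 1) * (\<Sum>m\<in>nonzero_freqs d. x j m powr p))"
      using assms by (simp add: powr_mult sum_nonneg x_def mult_left_mono)
  qed
  also have "\<dots> = B powr p * (2 * d) powr (p - 1) * real N * (\<Sum>m\<in>nonzero_freqs d. Vp N \<kappa> \<phi> p m)"
    by (simp add: Vp_def x_def sum_distrib_left sum.swap[of _ "nonzero_freqs d"])
  finally show ?thesis .
qed

lemma eventually_div_le_of_smallo:
  fixes D :: "real \<Rightarrow> real"
  assumes "(\<lambda>r. 1 / D r) \<in> o[at_right 0](\<lambda>r. r)"
  shows "eventually (\<lambda>r. C / D r \<le> r) (at_right 0)"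
proof -
  have "eventually (\<lambda>r. norm (1 / D r) \<le> 1 / (\<bar>C\<bar> + 1) * norm r) (at_right 0)"
    by (rule landau_o.smallD[OF assms]) (simp add: add_nonneg_pos)
  with eventually_at_right_less[of 0] show ?thesis
  proof eventually_elim
    case (elim r)
    have "C / D r \<le> \<bar>C\<bar> * norm (1 / D r)"
      using abs_ge_self[of "C / D r"] by (simp add: abs_divide)
    also have "\<dots> \<le> \<bar>C\<bar> * (1 / (\<bar>C\<bar> + 1) * r)"
      using elim by (intro mult_left_mono) auto
    also have "\<dots> \<le> r"
      using elim by (simp add: field_simps)
    finally show ?case .
  qed
qed

lemma mu_ge_radius:
  assumes "trig_poly a" and "cmod (fcoef a 0 - complex_of_real (arc_vol r)) \<le> r" and "r \<le> 1/2"
  shows "r \<le> mu a"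
proof -
  have "cmod (complex_of_real (mu a - 2 * r)) \<le> r"
    using assms by (simp add: trig_poly_fcoef_zero arc_vol_def)
  then show ?thesis
    unfolding norm_of_real by linarith
qed

lemma exc_set_density_bound:
  assumes "eigenbasis N \<kappa> M \<phi>" and "1 \<le> N" and "0 < L" and "1 \<le> p"
    and "0 < r" and "r \<le> 1/2" and rD: "1 \<le> r * D" and a: "trig_poly a"
    and vanish: "\<And>m. real_of_int \<bar>m\<bar> \<ge> D \<Longrightarrow> fcoef a m = 0"
    and mean: "cmod (fcoef a 0 - complex_of_real (arc_vol r)) \<le> r"
    and coef: "\<And>m. cmod (fcoef a m) \<le> B * r" and "0 \<le> B"
  shows "real (card (exc_set N \<kappa> \<phi> a L)) / real N
    \<le> B powr p * 2 powr (p - 1) * D powr (p - 1) / L powr p * (\<Sum>m\<in>nonzero_freqs D. Vp N \<kappa> \<phi> p m)"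
proof -
  have "D > 0"
    using zero_less_mult_pos[of r D] rD \<open>0 < r\<close> by linarith
  have nrm: "\<And>j. j \<in> {1..N} \<Longrightarrow> ipN N (\<phi> j) (\<phi> j) = 1"
    using assms(1) unfolding eigenbasis_def by auto
  have "real (card (exc_set N \<kappa> \<phi> a L)) * L powr p
      \<le> B powr p * (2 * D) powr (p - 1) * real N * (\<Sum>m\<in>nonzero_freqs D. Vp N \<kappa> \<phi> p m)"
    using mu_ge_radius[OF a mean] \<open>D > 0\<close> assms
    by (intro exc_set_card_bound[OF nrm a vanish coef]) auto
  then show ?thesis
    using assms \<open>D > 0\<close> by (simp add: powr_mult divide_le_eq field_simps)
qed

theorem lemma3p5:
  fixes p c0 :: real
  assumes "p \<ge> 1"
  shows "\<exists>c>0. \<forall>(D::real \<Rightarrow> real) (a::real \<Rightarrow> real \<Rightarrow> real) (C1::real) (maj::bool).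
    ((\<lambda>r. 1 / D r) \<in> o[at_right 0](\<lambda>r. r) \<and>
     (\<forall>r. 0 < r \<and> r < 1/2 \<longrightarrow>
        r * D r \<ge> 1 \<and> trig_poly (a r) \<and>
        (\<forall>y. if maj then arc_ind 0 r y \<le> a r y else a r y \<le> arc_ind 0 r y) \<and>
        (\<forall>m. real_of_int \<bar>m\<bar> \<ge> D r \<longrightarrow> fcoef (a r) m = 0) \<and>
        cmod (fcoef (a r) 0 - complex_of_real (arc_vol r)) \<le> C1 / D r \<and>
        (\<forall>m. cmod (fcoef (a r) m) \<le> c0 * r)))
    \<longrightarrow> (\<exists>r0>0. \<forall>r. 0 < r \<and> r < r0 \<longrightarrow>
          (\<forall>(N::nat) (\<kappa>::real \<times> real) (M::int^2^2) (\<phi>::nat \<Rightarrow> int \<Rightarrow> complex) (L::real).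
             N \<ge> 1 \<and> hyperbolic_SL2Z M \<and> eigenbasis N \<kappa> M \<phi> \<and> L > 0 \<longrightarrow>
             real (card (exc_set N \<kappa> \<phi> (a r) L)) / real N
               \<le> c * D r powr (p - 1) / L powr p *
                  (\<Sum>m\<in>{m::int. 1 \<le> \<bar>m\<bar> \<and> real_of_int \<bar>m\<bar> \<le> D r}. Vp N \<kappa> \<phi> p m)))"
proof (rule exI[of _ "max c0 1 powr p * 2 powr (p - 1)"], intro conjI allI impI, goal_cases)
  case (2 D a C1 maj)
  obtain r0 where "r0 > 0" and small_err: "\<And>r. 0 < r \<Longrightarrow> r < r0 \<Longrightarrow> C1 / D r \<le> r"
    using eventually_div_le_of_smallo[OF conjunct1[OF 2]] unfolding eventually_at_right_field by auto
  show ?case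
  proof (intro exI[of _ "min r0 (1/2)"] conjI allI impI)
    show "0 < min r0 (1/2)"
      using \<open>r0 > 0\<close> by simp
    fix r N \<kappa> M \<phi> and L :: real
    assume r: "0 < r \<and> r < min r0 (1/2)"
      and NL: "1 \<le> N \<and> hyperbolic_SL2Z M \<and> eigenbasis N \<kappa> M \<phi> \<and> 0 < L"
    have rD: "1 \<le> r * D r" and a: "trig_poly (a r)"
      and vanish: "\<And>m. real_of_int \<bar>m\<bar> \<ge> D r \<Longrightarrow> fcoef (a r) m = 0"
      and mean: "cmod (fcoef (a r) 0 - complex_of_real (arc_vol r)) \<le> C1 / D r"
      and coef: "\<And>m. cmod (fcoef (a r) m) \<le> c0 * r"
      using conjunct2[OF 2] r by auto
    have coef_max: "cmod (fcoef (a r) m) \<le> max c0 1 * r" for m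
      using coef[of m] r by (meson max.cobounded1 mult_right_mono order.trans less_imp_le)
    have "cmod (fcoef (a r) 0 - complex_of_real (arc_vol r)) \<le> r"
      using mean small_err[of r] r by simp
    then have "real (card (exc_set N \<kappa> \<phi> (a r) L)) / real N
        \<le> max c0 1 powr p * 2 powr (p - 1) * D r powr (p - 1) / L powr p *
          (\<Sum>m\<in>nonzero_freqs (D r). Vp N \<kappa> \<phi> p m)"
      using NL r by (intro exc_set_density_bound[OF _ _ _ assms _ _ rD a vanish _ coef_max]) auto
    then show "real (card (exc_set N \<kappa> \<phi> (a r) L)) / real N
        \<le> max c0 1 powr p * 2 powr (p - 1) * D r powr (p - 1) / L powr p *
          (\<Sum>m\<in>{m. 1 \<le> \<bar>m\<bar> \<and> real_of_int \<bar>m\<bar> \<le> D r}. Vp N \<kappa> \<phi> p m)"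
      unfolding nonzero_freqs_def .
  qed
qed simp

end
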